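(* Let $K \in \mathbb{R}^{m\times n}$ and let $\phi_1,\dots,\phi_m:\mathbb{R}\to(0,\infty)$ be bounded univariate probability densities. Define $f_X:\mathbb{R}^n\to(0,\infty)$ by $f_X(x) = \prod_{i=1}^m \phi_i\big((Kx)_i\big)$ and let $N := \ker(K)$. Then: (a) $\int_{\mathbb{R}^n} f_X(x)\,\mathrm{d}x < \infty$ if and only if $N = \{0\}$; (b) regardless of whether $K$ is injective, $\int_{N^\perp} f_X(x)\,\mathrm{d}x < \infty$, where the integral is with respect to Lebesgue measure on the linear subspace $N^\perp$.
   Context: $N^\perp$ denotes the orthogonal complement of $N$ in $\mathbb{R}^n$ (equivalently, the span of the rows of $K$). *)

theory Defs
  imports "HOL-Analysis.Analysis"
begin

definition bounded_pos_density :: "(real \<Rightarrow> real) \<Rightarrow> bool" where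
  "bounded_pos_density \<phi> \<longleftrightarrow>
     \<phi> \<in> borel_measurable borel \<and> (\<forall>t. 0 < \<phi> t) \<and> bounded (range \<phi>) \<and>
     (\<integral>\<^sup>+ t. ennreal (\<phi> t) \<partial>lborel) = 1"

definition ker_mat :: "real^'n^'m \<Rightarrow> (real^'n) set" where
  "ker_mat K = {x. K *v x = 0}"

definition orth_compl :: "(real^'n) set \<Rightarrow> (real^'n) set" where
  "orth_compl N = {x. \<forall>y\<in>N. orthogonal x y}"

definition fX :: "real^'n^'m \<Rightarrow> ('m \<Rightarrow> real \<Rightarrow> real) \<Rightarrow> real^'n \<Rightarrow> real" where
  "fX K \<phi> x = (\<Prod>i\<in>UNIV. \<phi> i ((K *v x) $ i))"

text \<open>Integral (nonnegative) of f over a linear subspace S with respect to its Lebesgue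
  measure, computed via an orthonormal basis b 0, ..., b (d-1) of S, i.e. as the Lebesgue
  integral over R^d of f (sum_j y_j b_j).\<close>
definition orthonormal_basis_of :: "nat \<Rightarrow> (nat \<Rightarrow> real^'n) \<Rightarrow> (real^'n) set \<Rightarrow> bool" where
  "orthonormal_basis_of d b S \<longleftrightarrow>
     (\<forall>i<d. \<forall>j<d. b i \<bullet> b j = (if i = j then 1 else 0)) \<and> span (b ` {..<d}) = S"

definition subspace_nn_integral ::
    "nat \<Rightarrow> (nat \<Rightarrow> real^'n) \<Rightarrow> (real^'n \<Rightarrow> real) \<Rightarrow> ennreal" where
  "subspace_nn_integral d b f =
     (\<integral>\<^sup>+ y. ennreal (f (\<Sum>j<d. y j *\<^sub>R b j)) \<partial>(PiM {..<d} (\<lambda>_. lborel)))"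

end

theory Submission
  imports Defs
begin

(*
  Let W be the matrix of y \<mapsto> K (\<Sum>\<^sub>j y\<^sub>j b\<^sub>j) for vectors b\<^sub>j (the standard basis, or an
  orthonormal basis of N\<^sup>\<bottom>). If W is injective, the integral of \<Prod>\<^sub>i \<phi>\<^sub>i(a\<^sub>i + (W y)\<^sub>i) over y
  is bounded uniformly in the offset a. This is Gaussian elimination, one variable at a time:
  pick a row r in which the variable y\<^sub>k occurs with coefficient c \<noteq> 0 and shift y\<^sub>k so that
  row r depends on the new variable t alone. The remaining rows form an injective system in the
  other variables, with an offset depending on t, so by induction their integral is bounded
  independently of t, and integrating \<phi>\<^sub>r(a\<^sub>r + c t) over t contributes the factor 1/|c|.
  Rows that are never pivoted are bounded by sup \<phi>\<^sub>i.

  Conversely, if K z = 0 with z \<noteq> 0, then f\<^sub>X is invariant under translation by z, so the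
  disjoint balls around the points k z all carry the same positive mass.
*)

definition pivot :: "('j \<Rightarrow> 'i \<Rightarrow> real) \<Rightarrow> 'j \<Rightarrow> 'i \<Rightarrow> 'j \<Rightarrow> 'i \<Rightarrow> real" where
  "pivot w k r j i = w j i - w j r / w k r * w k i"

definition independent_columns :: "'j set \<Rightarrow> 'i set \<Rightarrow> ('j \<Rightarrow> 'i \<Rightarrow> real) \<Rightarrow> bool" where
  "independent_columns I R w \<longleftrightarrow> (\<forall>y. (\<forall>i\<in>R. (\<Sum>j\<in>I. y j * w j i) = 0) \<longrightarrow> (\<forall>j\<in>I. y j = 0))"

lemma pivot_row_eq_0: "w k r \<noteq> 0 \<Longrightarrow> pivot w k r j r = 0"
  by (simp add: pivot_def)

lemma sum_fun_upd_pivot: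
  assumes "finite J" "k \<notin> J"
  shows "(\<Sum>j\<in>insert k J. (x(k := s)) j * w j i)
    = (s + (\<Sum>j\<in>J. x j * w j r) / w k r) * w k i + (\<Sum>j\<in>J. x j * pivot w k r j i)"
proof -
  have "(\<Sum>j\<in>J. (x(k := s)) j * w j i) = (\<Sum>j\<in>J. x j * w j i)"
    using assms(2) by (intro sum.cong) auto
  then show ?thesis
    using assms by (simp add: pivot_def algebra_simps sum_subtractf sum_distrib_left
        sum_distrib_right sum_divide_distrib)
qed

lemma independent_columns_pivot:
  fixes w :: "'j \<Rightarrow> 'i \<Rightarrow> real"
  assumes "finite J" "k \<notin> J" "w k r \<noteq> 0"
    and "independent_columns (insert k J) R w"
  shows "independent_columns J (R - {r}) (pivot w k r)"
  unfolding independent_columns_def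
proof (intro allI impI)
  fix y :: "'j \<Rightarrow> real"
  assume y: "\<forall>i\<in>R - {r}. (\<Sum>j\<in>J. y j * pivot w k r j i) = 0"
  define y' where "y' = y(k := - (\<Sum>j\<in>J. y j * w j r) / w k r)"
  have "(\<Sum>j\<in>insert k J. y' j * w j i) = (\<Sum>j\<in>J. y j * pivot w k r j i)" for i
    using sum_fun_upd_pivot[OF assms(1,2), where x=y and s="- (\<Sum>j\<in>J. y j * w j r) / w k r"
        and r=r]
    unfolding y'_def by simp
  moreover have "(\<Sum>j\<in>J. y j * pivot w k r j r) = 0"
    using assms(3) by (simp add: pivot_row_eq_0)
  ultimately have "\<forall>i\<in>R. (\<Sum>j\<in>insert k J. y' j * w j i) = 0"
    using y by (metis Diff_iff singletonD)
  with assms(4) have "\<forall>j\<in>insert k J. y' j = 0"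
    by (simp add: independent_columns_def)
  then show "\<forall>j\<in>J. y j = 0"
    using assms(2) unfolding y'_def by (metis fun_upd_other insert_iff)
qed

lemma nn_integral_real_affine_divide:
  fixes f :: "real \<Rightarrow> ennreal"
  assumes "f \<in> borel_measurable borel" "c \<noteq> 0"
  shows "(\<integral>\<^sup>+t. f (a + c * t) \<partial>lborel) = (\<integral>\<^sup>+t. f t \<partial>lborel) / ennreal \<bar>c\<bar>"
proof -
  have "(\<integral>\<^sup>+t. f t \<partial>lborel) = ennreal \<bar>c\<bar> * (\<integral>\<^sup>+t. f (a + c * t) \<partial>lborel)"
    using nn_integral_real_affine[OF assms, of a] .
  then show ?thesis
    using assms(2) by (simp add: mult.commute[of "ennreal _"] mult_divide_eq_ennreal)
qed

lemma nn_integral_PiM_insert_shift: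
  fixes F :: "('j \<Rightarrow> real) \<Rightarrow> ennreal" and h :: "('j \<Rightarrow> real) \<Rightarrow> real"
  assumes J: "finite J" "j \<notin> J"
    and [measurable]: "F \<in> borel_measurable (PiM (insert j J) (\<lambda>_. lborel))"
    and [measurable]: "h \<in> borel_measurable (PiM J (\<lambda>_. lborel))"
  shows "(\<integral>\<^sup>+y. F y \<partial>PiM (insert j J) (\<lambda>_. lborel))
    = (\<integral>\<^sup>+t. (\<integral>\<^sup>+x. F (x(j := t + h x)) \<partial>PiM J (\<lambda>_. lborel)) \<partial>lborel)"
proof -
  interpret product_sigma_finite "\<lambda>_::'j. lborel :: real measure"
    by (simp add: product_sigma_finite_def lborel.sigma_finite_measure_axioms)
  interpret pair_sigma_finite lborel "PiM J (\<lambda>_::'j. lborel :: real measure)"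
    by (simp add: pair_sigma_finite_def lborel.sigma_finite_measure_axioms sigma_finite J(1))
  have [measurable]: "(\<lambda>p. (snd p)(j := fst p + h (snd p)))
      \<in> measurable (lborel \<Otimes>\<^sub>M PiM J (\<lambda>_. lborel)) (PiM (insert j J) (\<lambda>_. lborel))"
    by (rule measurable_fun_upd[where J=J]) auto
  have "(\<integral>\<^sup>+y. F y \<partial>PiM (insert j J) (\<lambda>_. lborel))
      = (\<integral>\<^sup>+x. (\<integral>\<^sup>+s. F (x(j := s)) \<partial>lborel) \<partial>PiM J (\<lambda>_. lborel))"
    by (rule product_nn_integral_insert) (use J in auto)
  also have "\<dots> = (\<integral>\<^sup>+x. (\<integral>\<^sup>+t. F (x(j := t + h x)) \<partial>lborel) \<partial>PiM J (\<lambda>_. lborel))"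
  proof (rule nn_integral_cong)
    fix x assume "x \<in> space (PiM J (\<lambda>_. lborel :: real measure))"
    then have "(\<lambda>s. F (x(j := s))) \<in> borel_measurable lborel"
      using J(2) by (intro measurable_comp[OF measurable_component_update, unfolded comp_def]) auto
    then have "(\<lambda>s. F (x(j := s))) \<in> borel_measurable borel"
      by simp
    from nn_integral_real_affine[OF this, of 1 "h x"]
    show "(\<integral>\<^sup>+s. F (x(j := s)) \<partial>lborel) = (\<integral>\<^sup>+t. F (x(j := t + h x)) \<partial>lborel)"
      by (simp add: add.commute)
  qed
  also have "\<dots> = (\<integral>\<^sup>+t. (\<integral>\<^sup>+x. F (x(j := t + h x)) \<partial>PiM J (\<lambda>_. lborel)) \<partial>lborel)"
    by (rule Fubini') measurable
  finally show ?thesis .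
qed

lemma independent_columns_nonzero_entry:
  assumes "finite J" "k \<notin> J" "independent_columns (insert k J) R w"
  obtains r where "r \<in> R" "w k r \<noteq> 0"
proof -
  define e where "e j = (if j = k then 1 else 0 :: real)" for j
  have "(\<Sum>j\<in>insert k J. e j * w j i) = w k i" for i
    using assms(1,2) by (simp add: e_def sum.neutral)
  moreover have "\<not> (\<forall>j\<in>insert k J. e j = 0)"
    by (simp add: e_def)
  ultimately show thesis
    using assms(3) that unfolding independent_columns_def by metis
qed

lemma nn_integral_prod_affine_pivot_le:
  fixes \<phi> :: "'i \<Rightarrow> real \<Rightarrow> ennreal" and w :: "'j \<Rightarrow> 'i \<Rightarrow> real"
  assumes [measurable]: "\<And>i. \<phi> i \<in> borel_measurable borel"
    and J: "finite J" "k \<notin> J" and R: "finite R" "r \<in> R" and c: "w k r \<noteq> 0"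
    and B: "\<And>a. (\<integral>\<^sup>+x. (\<Prod>i\<in>R - {r}. \<phi> i (a i + (\<Sum>j\<in>J. x j * pivot w k r j i)))
      \<partial>PiM J (\<lambda>_. lborel)) \<le> B"
  shows "(\<integral>\<^sup>+y. (\<Prod>i\<in>R. \<phi> i (a i + (\<Sum>j\<in>insert k J. y j * w j i))) \<partial>PiM (insert k J) (\<lambda>_. lborel))
    \<le> (\<integral>\<^sup>+t. \<phi> r t \<partial>lborel) / ennreal \<bar>w k r\<bar> * B"
proof -
  define h where "h x = - (\<Sum>j\<in>J. x j * w j r) / w k r" for x :: "'j \<Rightarrow> real"
  \<comment> \<open>after the substitution \<open>y k = t + h x\<close>, row \<open>r\<close> depends on \<open>t\<close> alone\<close>
  have split: "(\<Prod>i\<in>R. \<phi> i (a i + (\<Sum>j\<in>insert k J. (x(k := t + h x)) j * w j i)))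
    = \<phi> r (a r + w k r * t)
      * (\<Prod>i\<in>R - {r}. \<phi> i ((a i + t * w k i) + (\<Sum>j\<in>J. x j * pivot w k r j i)))" for x t
  proof -
    have sum: "(\<Sum>j\<in>insert k J. (x(k := t + h x)) j * w j i)
        = t * w k i + (\<Sum>j\<in>J. x j * pivot w k r j i)" for i
      unfolding sum_fun_upd_pivot[OF J, where r=r] by (simp add: h_def)
    have pivot_row: "(\<Sum>j\<in>J. x j * pivot w k r j r) = 0"
      using c by (simp add: pivot_row_eq_0)
    show ?thesis
      unfolding sum prod.remove[OF R] pivot_row by (simp add: add.assoc mult.commute)
  qed
  have "(\<integral>\<^sup>+y. (\<Prod>i\<in>R. \<phi> i (a i + (\<Sum>j\<in>insert k J. y j * w j i))) \<partial>PiM (insert k J) (\<lambda>_. lborel))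
    = (\<integral>\<^sup>+t. (\<integral>\<^sup>+x. (\<Prod>i\<in>R. \<phi> i (a i + (\<Sum>j\<in>insert k J. (x(k := t + h x)) j * w j i)))
          \<partial>PiM J (\<lambda>_. lborel)) \<partial>lborel)"
    using J R unfolding h_def by (intro nn_integral_PiM_insert_shift) measurable
  also have "\<dots> = (\<integral>\<^sup>+t. \<phi> r (a r + w k r * t) * (\<integral>\<^sup>+x. (\<Prod>i\<in>R - {r}.
      \<phi> i ((a i + t * w k i) + (\<Sum>j\<in>J. x j * pivot w k r j i))) \<partial>PiM J (\<lambda>_. lborel)) \<partial>lborel)"
    unfolding split using R by (intro nn_integral_cong nn_integral_cmult) measurable
  also have "\<dots> \<le> (\<integral>\<^sup>+t. \<phi> r (a r + w k r * t) * B \<partial>lborel)"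
    by (intro nn_integral_mono mult_left_mono B) simp
  also have "\<dots> = (\<integral>\<^sup>+t. \<phi> r (a r + w k r * t) \<partial>lborel) * B"
    by (rule nn_integral_multc) measurable
  also have "\<dots> = (\<integral>\<^sup>+t. \<phi> r t \<partial>lborel) / ennreal \<bar>w k r\<bar> * B"
    using c by (simp add: nn_integral_real_affine_divide)
  finally show ?thesis .
qed

lemma nn_integral_prod_affine_uniformly_bounded:
  fixes \<phi> :: "'i \<Rightarrow> real \<Rightarrow> ennreal" and w :: "'j \<Rightarrow> 'i \<Rightarrow> real" and C :: "'i \<Rightarrow> real"
  assumes [measurable]: "\<And>i. \<phi> i \<in> borel_measurable borel"
    and bounded: "\<And>i t. \<phi> i t \<le> ennreal (C i)"
    and integrable: "\<And>i. (\<integral>\<^sup>+t. \<phi> i t \<partial>lborel) < \<infinity>"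
    and "finite I" "finite R" "independent_columns I R w"
  shows "\<exists>B<\<infinity>. \<forall>a. (\<integral>\<^sup>+y. (\<Prod>i\<in>R. \<phi> i (a i + (\<Sum>j\<in>I. y j * w j i))) \<partial>PiM I (\<lambda>_. lborel)) \<le> B"
  using assms(4-6)
proof (induction I arbitrary: R w rule: finite_induct)
  case empty
  have "(\<integral>\<^sup>+y. (\<Prod>i\<in>R. \<phi> i (a i + (\<Sum>j\<in>{}. y j * w j i))) \<partial>PiM {} (\<lambda>_. lborel))
      \<le> (\<Prod>i\<in>R. ennreal (C i))" for a
    by (simp add: PiM_empty nn_integral_count_space_finite prod_mono_ennreal bounded)
  moreover have "(\<Prod>i\<in>R. ennreal (C i)) < \<infinity>"
    by (simp add: less_top[symmetric] ennreal_prod_eq_top)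
  ultimately show ?case
    by blast
next
  case (insert k J)
  obtain r where r: "r \<in> R" "w k r \<noteq> 0"
    by (rule independent_columns_nonzero_entry[OF insert.hyps insert.prems(2)])
  have "independent_columns J (R - {r}) (pivot w k r)"
    using insert.hyps insert.prems r(2) by (intro independent_columns_pivot)
  with insert.IH insert.prems(1) obtain B where "B < \<infinity>" and B:
    "\<And>a. (\<integral>\<^sup>+x. (\<Prod>i\<in>R - {r}. \<phi> i (a i + (\<Sum>j\<in>J. x j * pivot w k r j i))) \<partial>PiM J (\<lambda>_. lborel)) \<le> B"
    by blast
  have "(\<integral>\<^sup>+y. (\<Prod>i\<in>R. \<phi> i (a i + (\<Sum>j\<in>insert k J. y j * w j i))) \<partial>PiM (insert k J) (\<lambda>_. lborel))
      \<le> (\<integral>\<^sup>+t. \<phi> r t \<partial>lborel) / ennreal \<bar>w k r\<bar> * B" for a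
    by (rule nn_integral_prod_affine_pivot_le[OF assms(1) insert.hyps insert.prems(1) r B])
  moreover have "(\<integral>\<^sup>+t. \<phi> r t \<partial>lborel) / ennreal \<bar>w k r\<bar> * B < \<infinity>"
    using \<open>B < \<infinity>\<close> integrable[of r] r(2)
    by (simp add: less_top[symmetric] ennreal_mult_eq_top_iff ennreal_divide_eq_top_iff)
  ultimately show ?case
    by blast
qed

lemma borel_measurable_fX[measurable]:
  fixes K :: "real^'n^'m" and \<phi> :: "'m \<Rightarrow> real \<Rightarrow> real"
  assumes [measurable]: "\<And>i. \<phi> i \<in> borel_measurable borel"
  shows "fX K \<phi> \<in> borel_measurable borel"
proof -
  have [measurable]: "(\<lambda>x. (K *v x) $ i) \<in> borel_measurable borel" for i
    by (intro borel_measurable_continuous_onI continuous_on_component linear_continuous_on)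
      (simp add: linear_linear[symmetric])
  show ?thesis
    unfolding fX_def[abs_def] by measurable
qed

lemma nn_integral_fX_parametrized_finite:
  fixes K :: "real^'n^'m" and \<phi> :: "'m \<Rightarrow> real \<Rightarrow> real" and b :: "'j \<Rightarrow> real^'n"
  assumes dens: "\<And>i. bounded_pos_density (\<phi> i)" and "finite I"
    and inj: "\<And>y. K *v (\<Sum>j\<in>I. y j *\<^sub>R b j) = 0 \<Longrightarrow> \<forall>j\<in>I. y j = 0"
  shows "(\<integral>\<^sup>+y. ennreal (fX K \<phi> (\<Sum>j\<in>I. y j *\<^sub>R b j)) \<partial>PiM I (\<lambda>_. lborel)) < \<infinity>"
proof -
  have [measurable]: "\<And>i. \<phi> i \<in> borel_measurable borel" and pos: "\<And>i t. 0 < \<phi> i t"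
    and mass: "\<And>i. (\<integral>\<^sup>+t. ennreal (\<phi> i t) \<partial>lborel) = 1"
    and bnd: "\<And>i. bounded (range (\<phi> i))"
    using dens by (auto simp: bounded_pos_density_def)
  from bnd obtain C where C: "\<And>i t. \<phi> i t \<le> C i"
    unfolding bounded_iff by (metis UNIV_I abs_le_D1 image_eqI real_norm_def)
  define w where "w j i = (K *v b j) $ i" for j i
  have "independent_columns I UNIV w"
    unfolding independent_columns_def
  proof (intro allI impI)
    fix y :: "'j \<Rightarrow> real"
    assume "\<forall>i\<in>UNIV. (\<Sum>j\<in>I. y j * w j i) = 0"
    then have "K *v (\<Sum>j\<in>I. y j *\<^sub>R b j) = 0"
      by (simp add: vec_eq_iff vec.sum matrix_vector_mult_scaleR w_def)
    then show "\<forall>j\<in>I. y j = 0" by (rule inj)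
  qed
  then have "\<exists>B<\<infinity>. \<forall>a. (\<integral>\<^sup>+y. (\<Prod>i\<in>UNIV. ennreal (\<phi> i (a i + (\<Sum>j\<in>I. y j * w j i))))
      \<partial>PiM I (\<lambda>_. lborel)) \<le> B"
    by (intro nn_integral_prod_affine_uniformly_bounded[where C=C])
      (simp_all add: C ennreal_leI mass \<open>finite I\<close>)
  then obtain B where "B < \<infinity>" and B: "\<And>a. (\<integral>\<^sup>+y. (\<Prod>i\<in>UNIV. ennreal (\<phi> i (a i + (\<Sum>j\<in>I. y j * w j i))))
      \<partial>PiM I (\<lambda>_. lborel)) \<le> B"
    by blast
  have "ennreal (fX K \<phi> (\<Sum>j\<in>I. y j *\<^sub>R b j)) = (\<Prod>i\<in>UNIV. ennreal (\<phi> i (0 + (\<Sum>j\<in>I. y j * w j i))))" for y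
    by (simp add: fX_def vec.sum matrix_vector_mult_scaleR w_def prod_ennreal less_imp_le[OF pos])
  then show ?thesis
    using B[of "\<lambda>_. 0"] \<open>B < \<infinity>\<close> by (simp add: le_less_trans)
qed

lemma suminf_const_ennreal: "(c::ennreal) \<noteq> 0 \<Longrightarrow> (\<Sum>n. c) = \<infinity>"
  by (simp add: suminf_eq_SUP SUP_mult_right_ennreal[symmetric] ennreal_SUP_of_nat_eq_top
      ennreal_top_mult)

lemma set_nn_integral_ball_neq_0:
  fixes g :: "'a::euclidean_space \<Rightarrow> ennreal"
  assumes [measurable]: "g \<in> borel_measurable borel" and pos: "\<And>x. 0 < g x" and "0 < r"
  shows "(\<integral>\<^sup>+x\<in>ball c r. g x \<partial>lborel) \<noteq> 0"
proof
  assume "(\<integral>\<^sup>+x\<in>ball c r. g x \<partial>lborel) = 0"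
  then have "AE x in lborel. g x * indicator (ball c r) x = 0"
    by (subst (asm) nn_integral_0_iff_AE) (measurable, simp)
  moreover have "g x \<noteq> 0" for x
    using pos[of x] by simp
  ultimately have "AE x in lborel. x \<notin> ball c r"
    by (auto simp: indicator_def)
  then have "emeasure lborel (ball c r) = 0"
    by (subst (asm) AE_iff_measurable[of "ball c r"]) auto
  with content_ball_pos[OF \<open>0 < r\<close>, of c] show False
    by (simp add: measure_def)
qed

lemma nn_integral_lborel_eq_top_if_periodic:
  fixes g :: "'a::euclidean_space \<Rightarrow> ennreal"
  assumes [measurable]: "g \<in> borel_measurable borel" and pos: "\<And>x. 0 < g x" and "z \<noteq> 0"
    and periodic: "\<And>x k. g (real k *\<^sub>R z + x) = g x"
  shows "(\<integral>\<^sup>+x. g x \<partial>lborel) = \<infinity>"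
proof -
  define r where "r = norm z / 2"
  define B where "B k = ball (real k *\<^sub>R z) r" for k :: nat
  have [measurable]: "B k \<in> sets borel" for k
    by (simp add: B_def)
  have "0 < r"
    using \<open>z \<noteq> 0\<close> by (simp add: r_def)
  have "disjoint_family B"
    unfolding disjoint_family_on_def
  proof (intro ballI impI)
    fix k l :: nat assume "k \<noteq> l"
    show "B k \<inter> B l = {}"
    proof (rule ccontr)
      assume "B k \<inter> B l \<noteq> {}"
      then obtain x where "dist (real k *\<^sub>R z) x < r" "dist (real l *\<^sub>R z) x < r"
        by (auto simp: B_def)
      then have "dist (real k *\<^sub>R z) (real l *\<^sub>R z) < r + r"
        by (rule dist_triangle_less_add)
      then have "norm ((real k - real l) *\<^sub>R z) < norm z"
        by (simp add: r_def dist_norm scaleR_diff_left)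
      moreover have "norm z \<le> norm ((real k - real l) *\<^sub>R z)"
        using \<open>k \<noteq> l\<close> by (simp add: mult_le_cancel_right1) linarith
      ultimately show False
        by simp
    qed
  qed
  have translate: "(\<integral>\<^sup>+x\<in>B k. g x \<partial>lborel) = (\<integral>\<^sup>+x\<in>ball 0 r. g x \<partial>lborel)" for k
  proof -
    have "(\<integral>\<^sup>+x\<in>B k. g x \<partial>lborel) = (\<integral>\<^sup>+x\<in>B k. g x \<partial>distr lborel borel ((+) (real k *\<^sub>R z)))"
      by (simp only: lborel_distr_plus)
    also have "\<dots> = (\<integral>\<^sup>+x. g (real k *\<^sub>R z + x) * indicator (B k) (real k *\<^sub>R z + x) \<partial>lborel)"
      by (rule nn_integral_distr) measurable
    also have "\<dots> = (\<integral>\<^sup>+x\<in>ball 0 r. g x \<partial>lborel)"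
      unfolding periodic by (intro nn_integral_cong) (simp add: B_def indicator_def dist_norm)
    finally show ?thesis .
  qed
  have "(\<integral>\<^sup>+x\<in>(\<Union>k. B k). g x \<partial>lborel) = (\<Sum>k. (\<integral>\<^sup>+x\<in>B k. g x \<partial>lborel))"
    using \<open>disjoint_family B\<close> by (intro nn_integral_disjoint_family) simp_all
  also have "\<dots> = (\<Sum>k. (\<integral>\<^sup>+x\<in>ball 0 r. g x \<partial>lborel))"
    by (simp only: translate)
  also have "\<dots> = \<infinity>"
    using set_nn_integral_ball_neq_0[OF assms(1) pos \<open>0 < r\<close>, of 0] by (simp add: suminf_const_ennreal)
  finally show ?thesis
    using nn_integral_mono[of lborel "\<lambda>x. g x * indicator (\<Union>k. B k) x" g]
    by (simp add: indicator_def top_unique)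
qed

lemma nn_integral_fX_finite_if_ker_mat_trivial:
  fixes K :: "real^'n^'m" and \<phi> :: "'m \<Rightarrow> real \<Rightarrow> real"
  assumes dens: "\<And>i. bounded_pos_density (\<phi> i)" and ker: "ker_mat K = {0}"
  shows "(\<integral>\<^sup>+x. ennreal (fX K \<phi> x) \<partial>lborel) < \<infinity>"
proof -
  have [measurable]: "\<And>i. \<phi> i \<in> borel_measurable borel"
    using dens by (simp add: bounded_pos_density_def)
  have "(\<integral>\<^sup>+x. ennreal (fX K \<phi> x) \<partial>lborel)
      = (\<integral>\<^sup>+x. ennreal (fX K \<phi> x) \<partial>distr (PiM Basis (\<lambda>_. lborel)) borel (\<lambda>y. \<Sum>b\<in>Basis. y b *\<^sub>R b))"
    by (simp only: lborel_eq[where 'a="real^'n"])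
  also have "\<dots> = (\<integral>\<^sup>+y. ennreal (fX K \<phi> (\<Sum>b\<in>Basis. y b *\<^sub>R b)) \<partial>PiM Basis (\<lambda>_. lborel))"
    by (rule nn_integral_distr) measurable
  also have "\<dots> < \<infinity>"
  proof (rule nn_integral_fX_parametrized_finite[OF dens])
    fix y :: "real^'n \<Rightarrow> real"
    assume "K *v (\<Sum>b\<in>Basis. y b *\<^sub>R b) = 0"
    then have "(\<Sum>b\<in>Basis. y b *\<^sub>R b) = 0"
      using ker by (auto simp: ker_mat_def)
    then show "\<forall>b\<in>Basis. y b = 0"
      by (metis inner_sum_left_Basis inner_zero_left)
  qed simp
  finally show ?thesis .
qed

lemma ker_mat_trivial_if_nn_integral_fX_finite:
  fixes K :: "real^'n^'m" and \<phi> :: "'m \<Rightarrow> real \<Rightarrow> real"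
  assumes dens: "\<And>i. bounded_pos_density (\<phi> i)"
    and finite: "(\<integral>\<^sup>+x. ennreal (fX K \<phi> x) \<partial>lborel) < \<infinity>"
  shows "ker_mat K = {0}"
proof (rule ccontr)
  assume "ker_mat K \<noteq> {0}"
  then obtain z where "K *v z = 0" "z \<noteq> 0"
    by (auto simp: ker_mat_def)
  have [measurable]: "\<And>i. \<phi> i \<in> borel_measurable borel" and pos: "\<And>i t. 0 < \<phi> i t"
    using dens by (auto simp: bounded_pos_density_def)
  have "(\<integral>\<^sup>+x. ennreal (fX K \<phi> x) \<partial>lborel) = \<infinity>"
  proof (rule nn_integral_lborel_eq_top_if_periodic[OF _ _ \<open>z \<noteq> 0\<close>])
    show "\<And>x. 0 < ennreal (fX K \<phi> x)"
      using pos by (simp add: fX_def prod_pos)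
    show "\<And>x k. ennreal (fX K \<phi> (real k *\<^sub>R z + x)) = ennreal (fX K \<phi> x)"
      using \<open>K *v z = 0\<close>
      by (simp add: fX_def matrix_vector_right_distrib matrix_vector_mult_scaleR)
  qed measurable
  with finite show False
    by simp
qed

lemma subspace_nn_integral_fX_finite:
  fixes K :: "real^'n^'m" and \<phi> :: "'m \<Rightarrow> real \<Rightarrow> real"
  assumes dens: "\<And>i. bounded_pos_density (\<phi> i)"
    and onb: "orthonormal_basis_of d b (orth_compl (ker_mat K))"
  shows "subspace_nn_integral d b (fX K \<phi>) < \<infinity>"
  unfolding subspace_nn_integral_def
proof (rule nn_integral_fX_parametrized_finite[OF dens])
  fix y :: "nat \<Rightarrow> real"
  define v where "v = (\<Sum>j<d. y j *\<^sub>R b j)"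
  assume "K *v (\<Sum>j<d. y j *\<^sub>R b j) = 0"
  then have "v \<in> ker_mat K"
    by (simp add: ker_mat_def v_def)
  moreover have "v \<in> orth_compl (ker_mat K)"
    using onb unfolding v_def orthonormal_basis_of_def
    by (metis (no_types, lifting) imageI span_base span_scale span_sum)
  ultimately have "v \<bullet> v = 0"
    by (simp add: orth_compl_def orthogonal_def)
  then have "v = 0"
    by simp
  have "v \<bullet> b j = y j" if "j < d" for j
  proof -
    have "v \<bullet> b j = (\<Sum>k<d. y k * (b k \<bullet> b j))"
      by (simp add: v_def inner_sum_left)
    also have "\<dots> = (\<Sum>k<d. if k = j then y k else 0)"
      using onb that by (intro sum.cong) (auto simp: orthonormal_basis_of_def)
    also have "\<dots> = y j"
      using that by simp
    finally show ?thesis .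
  qed
  with \<open>v = 0\<close> show "\<forall>j\<in>{..<d}. y j = 0"
    by simp
qed simp

theorem proposition2p1:
  fixes K :: "real^'n^'m" and \<phi> :: "'m \<Rightarrow> real \<Rightarrow> real"
  assumes "\<And>i. bounded_pos_density (\<phi> i)"
  shows "((\<integral>\<^sup>+ x. ennreal (fX K \<phi> x) \<partial>lborel) < \<infinity> \<longleftrightarrow> ker_mat K = {0})
     \<and> (\<forall>d b. orthonormal_basis_of d b (orth_compl (ker_mat K)) \<longrightarrow>
              subspace_nn_integral d b (fX K \<phi>) < \<infinity>)"
  using nn_integral_fX_finite_if_ker_mat_trivial[where K=K and \<phi>=\<phi>, OF assms]
    ker_mat_trivial_if_nn_integral_fX_finite[where K=K and \<phi>=\<phi>, OF assms]
    subspace_nn_integral_fX_finite[where K=K and \<phi>=\<phi>, OF assms]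
  by blast

end
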